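(* Fix a positive integer $m$, graphs $H_1,\dots,H_k$ each with exactly $m$ edges, a finite complete graph $K$ on at least two vertices, and real constants $\gamma_1,\dots,\gamma_k$. Set \[ \mathcal{O}=\max_{\nu\in\Delta^K}\sum_{i=1}^k\gamma_i\,\beta(\nu;H_i). \] If $\mu\in\Delta^K$ achieves $\mathcal{O}$, then \begin{align*} m\cdot\mathcal{O}\cdot\mu(e)&=\sum_{i=1}^k\gamma_i\sum_{\substack{H\in\mathrm{cp}(K,H_i),\\ E(H)\ni e}}\mu(H)\quad\text{for each } e\in E(K),\\ m\cdot\mathcal{O}\cdot\bar\mu(x)&=\sum_{i=1}^k\gamma_i\sum_{\substack{H\in\mathrm{cp}(K,H_i),\\ V(H)\ni x}}\deg_H(x)\,\mu(H)\quad\text{for each } x\in V(K). \end{align*}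
   Context: $\Delta^K$ is the set of probability measures on $E(K)$ (edge probability measures on $K$). $\mathrm{cp}(K,H)$ is the set of (unlabeled, not necessarily induced) subgraphs of $K$ isomorphic to $H$. For $\mu\in\Delta^K$ and a subgraph $H\subseteq K$, $\mu(H)=\prod_{e\in E(H)}\mu(e)$; $\beta(\mu;H)=\sum_{H'\in\mathrm{cp}(K,H)}\mu(H')$; and $\bar\mu(x)=\sum_{y\in V(K)\setminus\{x\}}\mu(xy)$. *)

theory Defs
  imports Complex_Main
begin

text \<open>A (finite, simple) graph is a pair (vertex set, edge set), edges being 2-element vertex sets.\<close>
type_synonym 'a graph = "'a set \<times> 'a set set"

definition simple_graph :: "'a graph \<Rightarrow> bool" where
  "simple_graph G \<longleftrightarrow> finite (fst G) \<and> (\<forall>e\<in>snd G. e \<subseteq> fst G \<and> card e = 2)"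

definition complete_edges :: "'a set \<Rightarrow> 'a set set" where
  "complete_edges V = {e. e \<subseteq> V \<and> card e = 2}"

definition graph_iso :: "'b graph \<Rightarrow> 'a graph \<Rightarrow> bool" where
  "graph_iso G G' \<longleftrightarrow> (\<exists>f. bij_betw f (fst G) (fst G') \<and>
      (\<forall>u\<in>fst G. \<forall>v\<in>fst G. {u, v} \<in> snd G \<longleftrightarrow> {f u, f v} \<in> snd G'))"

text \<open>cp(K,H): (unlabeled, not necessarily induced) subgraphs of the complete graph on V isomorphic to H.\<close>
definition cp :: "'a set \<Rightarrow> 'b graph \<Rightarrow> 'a graph set" where
  "cp V H = {G. simple_graph G \<and> fst G \<subseteq> V \<and> graph_iso H G}"

definition edge_measures :: "'a set \<Rightarrow> ('a set \<Rightarrow> real) set" where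
  "edge_measures V = {\<mu>. (\<forall>e\<in>complete_edges V. 0 \<le> \<mu> e) \<and> (\<forall>e. e \<notin> complete_edges V \<longrightarrow> \<mu> e = 0)
       \<and> (\<Sum>e\<in>complete_edges V. \<mu> e) = 1}"

definition mu_graph :: "('a set \<Rightarrow> real) \<Rightarrow> 'a graph \<Rightarrow> real" where
  "mu_graph \<mu> G = (\<Prod>e\<in>snd G. \<mu> e)"

definition beta :: "'a set \<Rightarrow> ('a set \<Rightarrow> real) \<Rightarrow> 'b graph \<Rightarrow> real" where
  "beta V \<mu> H = (\<Sum>G\<in>cp V H. mu_graph \<mu> G)"

definition mu_bar :: "'a set \<Rightarrow> ('a set \<Rightarrow> real) \<Rightarrow> 'a \<Rightarrow> real" where
  "mu_bar V \<mu> x = (\<Sum>y\<in>V - {x}. \<mu> {x, y})"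

definition deg :: "'a graph \<Rightarrow> 'a \<Rightarrow> nat" where
  "deg G x = card {e\<in>snd G. x \<in> e}"

end

theory Submission
  imports Defs
begin

(* Let g be the gradient of the objective at the maximiser \<mu>. Moving mass t from an edge e with
   \<mu> e > 0 to any edge e' yields an edge measure for 0 \<le> t \<le> \<mu> e, so the right derivative
   g e' - g e of the objective in t is non-positive. Hence g equals a constant \<lambda> on the support
   of \<mu>, i.e. \<mu> e * g e = \<mu> e * \<lambda> for all edges e. Since the objective is a combination of
   products of m distinct edge weights, \<mu> e * g e is exactly the right-hand side of the edge
   identity (Euler's identity for monomials), and summing over all edges, where every copy is
   counted m times, gives \<lambda> = m * Opt. Summing the edge identity over the edges at x counts each
   copy H exactly deg_H(x) times, which is the vertex identity. *)

lemma finite_complete_edges: "finite V \<Longrightarrow> finite (complete_edges V)"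
  unfolding complete_edges_def by (rule finite_subset[of _ "Pow V"]) auto

lemma finite_cp:
  assumes "finite V"
  shows "finite (cp V H)"
proof (rule finite_subset)
  show "cp V H \<subseteq> Pow V \<times> Pow (Pow V)"
    by (fastforce simp: cp_def simple_graph_def)
  show "finite (Pow V \<times> Pow (Pow V))"
    using assms by simp
qed

lemma simple_graph_finite_edges:
  assumes "simple_graph G"
  shows "finite (snd G)"
proof (rule finite_subset)
  show "snd G \<subseteq> Pow (fst G)"
    using assms by (auto simp: simple_graph_def)
  show "finite (Pow (fst G))"
    using assms by (simp add: simple_graph_def)
qed

lemma simple_graph_edgeE:
  assumes "simple_graph G" "e \<in> snd G"
  obtains u v where "e = {u, v}" "u \<noteq> v" "u \<in> fst G" "v \<in> fst G"
  using assms by (fastforce simp: simple_graph_def card_2_iff)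

lemma simple_graph_edges_subset_complete_edges:
  assumes "simple_graph G" "fst G \<subseteq> V"
  shows "snd G \<subseteq> complete_edges V"
  using assms by (auto simp: simple_graph_def complete_edges_def)

lemma cp_simple_graph_on:
  assumes "G \<in> cp V H"
  shows "simple_graph G" "fst G \<subseteq> V"
  using assms by (auto simp: cp_def)

lemma graph_iso_card_edges:
  assumes "simple_graph G" "simple_graph G'" "graph_iso G G'"
  shows "card (snd G') = card (snd G)"
proof -
  obtain f where bij: "bij_betw f (fst G) (fst G')"
    and adj: "\<forall>u\<in>fst G. \<forall>v\<in>fst G. {u, v} \<in> snd G \<longleftrightarrow> {f u, f v} \<in> snd G'"
    using assms(3) by (auto simp: graph_iso_def)
  have inj: "inj_on f (fst G)"
    using bij by (rule bij_betw_imp_inj_on)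
  have "inj_on (image f) (snd G)"
    by (rule inj_on_subset[OF inj_on_image_Pow[OF inj]]) (use assms(1) in \<open>auto simp: simple_graph_def\<close>)
  moreover have "image f ` snd G = snd G'"
  proof (intro equalityI subsetI)
    fix e' assume "e' \<in> image f ` snd G"
    then obtain e where e: "e \<in> snd G" "e' = f ` e"
      by blast
    then obtain u v where "e = {u, v}" "u \<in> fst G" "v \<in> fst G"
      using assms(1) by (auto elim: simple_graph_edgeE)
    then show "e' \<in> snd G'"
      using adj e by auto
  next
    fix e' assume e': "e' \<in> snd G'"
    then obtain a b where ab: "e' = {a, b}" "a \<in> fst G'" "b \<in> fst G'"
      using assms(2) by (auto elim: simple_graph_edgeE)
    then obtain u v where "u \<in> fst G" "v \<in> fst G" "a = f u" "b = f v"
      using bij by (metis bij_betw_imp_surj_on imageE)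
    with adj e' ab show "e' \<in> image f ` snd G"
      by (intro image_eqI[of _ _ "{u, v}"]) auto
  qed
  ultimately show ?thesis
    by (metis bij_betw_def bij_betw_same_card)
qed

lemma edge_measure_nonneg: "\<nu> \<in> edge_measures V \<Longrightarrow> 0 \<le> \<nu> e"
  by (cases "e \<in> complete_edges V") (auto simp: edge_measures_def)

lemma edge_measure_le_one:
  assumes "\<nu> \<in> edge_measures V" "finite V"
  shows "\<nu> e \<le> 1"
proof (cases "e \<in> complete_edges V")
  case True
  have "\<nu> e \<le> (\<Sum>e\<in>complete_edges V. \<nu> e)"
    using True assms by (intro member_le_sum finite_complete_edges) (auto intro: edge_measure_nonneg)
  with assms(1) show ?thesis
    by (simp add: edge_measures_def)
next
  case False
  with assms(1) show ?thesis
    by (simp add: edge_measures_def)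
qed

lemma abs_mu_graph_le_one:
  assumes "\<nu> \<in> edge_measures V" "finite V"
  shows "\<bar>mu_graph \<nu> G\<bar> \<le> 1"
  using edge_measure_nonneg[OF assms(1)] edge_measure_le_one[OF assms]
  by (simp add: mu_graph_def prod_nonneg prod_le_1)

lemma abs_beta_le_card_cp:
  assumes "\<nu> \<in> edge_measures V" "finite V"
  shows "\<bar>beta V \<nu> H\<bar> \<le> card (cp V H)"
proof -
  have "\<bar>beta V \<nu> H\<bar> \<le> (\<Sum>G\<in>cp V H. \<bar>mu_graph \<nu> G\<bar>)"
    unfolding beta_def by (rule sum_abs)
  also have "\<dots> \<le> (\<Sum>G\<in>cp V H. 1)"
    using abs_mu_graph_le_one[OF assms] by (intro sum_mono)
  finally show ?thesis
    by simp
qed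

lemma bdd_above_weighted_beta:
  assumes "finite V"
  shows "bdd_above ((\<lambda>\<nu>. \<Sum>i<k. \<gamma> i * beta V \<nu> (H i)) ` edge_measures V)"
proof (rule bdd_aboveI2)
  fix \<nu> assume \<nu>: "\<nu> \<in> edge_measures V"
  have "\<gamma> i * beta V \<nu> (H i) \<le> \<bar>\<gamma> i\<bar> * card (cp V (H i))" for i
  proof -
    have "\<gamma> i * beta V \<nu> (H i) \<le> \<bar>\<gamma> i\<bar> * \<bar>beta V \<nu> (H i)\<bar>"
      by (metis abs_ge_self abs_mult)
    also have "\<dots> \<le> \<bar>\<gamma> i\<bar> * card (cp V (H i))"
      by (rule mult_left_mono[OF abs_beta_le_card_cp[OF \<nu> assms]]) simp
    finally show ?thesis .
  qed
  then show "(\<Sum>i<k. \<gamma> i * beta V \<nu> (H i)) \<le> (\<Sum>i<k. \<bar>\<gamma> i\<bar> * card (cp V (H i)))"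
    by (intro sum_mono)
qed

definition transfer :: "('e \<Rightarrow> real) \<Rightarrow> 'e \<Rightarrow> 'e \<Rightarrow> real \<Rightarrow> 'e \<Rightarrow> real" where
  "transfer \<nu> e e' t b = \<nu> b + t * (of_bool (b = e') - of_bool (b = e))"

lemma transfer_zero [simp]: "transfer \<nu> e e' 0 = \<nu>"
  by (simp add: transfer_def fun_eq_iff)

lemma transfer_in_edge_measures:
  assumes "\<mu> \<in> edge_measures V" "finite V" "e \<in> complete_edges V" "e' \<in> complete_edges V"
    and "0 \<le> t" "t \<le> \<mu> e"
  shows "transfer \<mu> e e' t \<in> edge_measures V"
proof -
  have "0 \<le> transfer \<mu> e e' t b" for b
    using assms(5,6) edge_measure_nonneg[OF assms(1), of b] by (auto simp: transfer_def)
  moreover have "transfer \<mu> e e' t b = 0" if "b \<notin> complete_edges V" for b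
    using that assms(1,3,4) by (auto simp: transfer_def edge_measures_def)
  moreover have "(\<Sum>b\<in>complete_edges V. transfer \<mu> e e' t b) = 1"
    using assms(1-4) finite_complete_edges[of V]
    by (simp add: transfer_def edge_measures_def sum.distrib sum_subtractf flip: sum_distrib_left)
  ultimately show ?thesis
    by (simp add: edge_measures_def)
qed

definition mu_graph_partial :: "('a set \<Rightarrow> real) \<Rightarrow> 'a graph \<Rightarrow> 'a set \<Rightarrow> real" where
  "mu_graph_partial \<nu> G a = (if a \<in> snd G then \<Prod>b\<in>snd G - {a}. \<nu> b else 0)"

lemma has_field_derivative_mu_graph_transfer:
  assumes "finite (snd G)"
  shows "((\<lambda>t. mu_graph (transfer \<nu> e e' t) G) has_field_derivative
           mu_graph_partial \<nu> G e' - mu_graph_partial \<nu> G e) (at 0)"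
proof -
  have "((\<lambda>t. \<Prod>b\<in>snd G. transfer \<nu> e e' t b) has_field_derivative
          (\<Sum>a\<in>snd G. (of_bool (a = e') - of_bool (a = e)) * (\<Prod>b\<in>snd G - {a}. transfer \<nu> e e' 0 b))) (at 0)"
    unfolding transfer_def
    by (rule has_field_derivative_prod) (auto intro!: derivative_eq_intros)
  also have "(\<Sum>a\<in>snd G. (of_bool (a = e') - of_bool (a = e)) * (\<Prod>b\<in>snd G - {a}. transfer \<nu> e e' 0 b))
      = mu_graph_partial \<nu> G e' - mu_graph_partial \<nu> G e"
    using assms by (simp add: mu_graph_partial_def left_diff_distrib sum_subtractf Int_insert_right)
  finally show ?thesis
    unfolding mu_graph_def .
qed

lemma mu_times_mu_graph_partial:
  assumes "finite (snd G)"
  shows "\<nu> a * mu_graph_partial \<nu> G a = (if a \<in> snd G then mu_graph \<nu> G else 0)"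
  using assms by (simp add: mu_graph_partial_def mu_graph_def prod.remove)

definition beta_partial :: "'a set \<Rightarrow> ('a set \<Rightarrow> real) \<Rightarrow> 'b graph \<Rightarrow> 'a set \<Rightarrow> real" where
  "beta_partial V \<nu> H a = (\<Sum>G\<in>cp V H. mu_graph_partial \<nu> G a)"

lemma has_field_derivative_beta_transfer:
  assumes "finite V"
  shows "((\<lambda>t. beta V (transfer \<nu> e e' t) H) has_field_derivative
           beta_partial V \<nu> H e' - beta_partial V \<nu> H e) (at 0)"
  unfolding beta_def beta_partial_def sum_subtractf[symmetric]
  by (intro DERIV_sum has_field_derivative_mu_graph_transfer simple_graph_finite_edges cp_simple_graph_on)

lemma mu_times_beta_partial:
  assumes "finite V"
  shows "\<nu> a * beta_partial V \<nu> H a = (\<Sum>G\<in>{G\<in>cp V H. a \<in> snd G}. mu_graph \<nu> G)"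
  using assms
  by (simp add: beta_partial_def sum_distrib_left mu_times_mu_graph_partial simple_graph_finite_edges
      cp_simple_graph_on finite_cp sum.inter_filter cong: sum.cong)

lemma has_real_derivative_nonpos_at_right_max:
  assumes "(g has_real_derivative D) (at x)" "0 < \<delta>" "\<And>t. x < t \<Longrightarrow> t \<le> x + \<delta> \<Longrightarrow> g t \<le> g x"
  shows "D \<le> 0"
proof (rule ccontr)
  assume "\<not> D \<le> 0"
  then obtain d where "0 < d" and increasing: "\<And>h. 0 < h \<Longrightarrow> h < d \<Longrightarrow> g x < g (x + h)"
    using DERIV_pos_inc_right[OF assms(1)] by force
  define h where "h = min (d / 2) \<delta>"
  have "0 < h" "h < d" "h \<le> \<delta>"
    using \<open>0 < d\<close> assms(2) by (auto simp: h_def)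
  then show False
    using increasing[of h] assms(3)[of "x + h"] by fastforce
qed

lemma maximizer_transfer_gradient_le:
  assumes "\<mu> \<in> edge_measures V" "finite V" "\<And>\<nu>. \<nu> \<in> edge_measures V \<Longrightarrow> \<Phi> \<nu> \<le> \<Phi> \<mu>"
    and "e \<in> complete_edges V" "e' \<in> complete_edges V" "0 < \<mu> e"
    and "((\<lambda>t. \<Phi> (transfer \<mu> e e' t)) has_real_derivative g e' - g e) (at 0)"
  shows "g e' \<le> g e"
proof -
  have "g e' - g e \<le> 0"
  proof (rule has_real_derivative_nonpos_at_right_max[OF assms(7) assms(6)])
    fix t :: real assume "0 < t" "t \<le> 0 + \<mu> e"
    then show "\<Phi> (transfer \<mu> e e' t) \<le> \<Phi> (transfer \<mu> e e' 0)"
      using assms(1-5) by (simp add: transfer_in_edge_measures)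
  qed
  then show ?thesis
    by simp
qed

lemma gradient_eq_on_support:
  assumes "\<mu> \<in> edge_measures V"
    and "\<And>e e'. e \<in> complete_edges V \<Longrightarrow> e' \<in> complete_edges V \<Longrightarrow> 0 < \<mu> e \<Longrightarrow> g e' \<le> g e"
    and "a \<in> complete_edges V"
  shows "\<mu> a * g a = \<mu> a * (\<Sum>b\<in>complete_edges V. \<mu> b * g b)"
proof -
  have nonneg: "\<And>b. 0 \<le> \<mu> b" and total: "(\<Sum>b\<in>complete_edges V. \<mu> b) = 1"
    using assms(1) by (auto simp: edge_measures_def intro: edge_measure_nonneg)
  have "\<exists>e\<in>complete_edges V. 0 < \<mu> e"
  proof (rule ccontr)
    assume "\<not> ?thesis"
    then have "(\<Sum>b\<in>complete_edges V. \<mu> b) \<le> 0"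
      by (intro sum_nonpos) (simp add: not_less)
    with total show False
      by simp
  qed
  then obtain e where e: "e \<in> complete_edges V" "0 < \<mu> e" ..
  have on_support: "\<mu> b * g b = \<mu> b * g e" if "b \<in> complete_edges V" for b
  proof (cases "0 < \<mu> b")
    case True
    then show ?thesis
      using assms(2)[OF that e(1) True] assms(2)[OF e(1) that e(2)] by simp
  next
    case False
    then show ?thesis
      using nonneg[of b] by simp
  qed
  have "(\<Sum>b\<in>complete_edges V. \<mu> b * g b) = g e"
    using total by (simp add: on_support flip: sum_distrib_right)
  then show ?thesis
    using on_support[OF assms(3)] by simp
qed

lemma card_neighbours_eq_deg:
  assumes "simple_graph G" "fst G \<subseteq> V"
  shows "card {y \<in> V - {x}. {x, y} \<in> snd G} = deg G x"
proof -
  have "bij_betw (\<lambda>y. {x, y}) {y \<in> V - {x}. {x, y} \<in> snd G} {e \<in> snd G. x \<in> e}"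
  proof (rule bij_betwI')
    fix e assume e: "e \<in> {e \<in> snd G. x \<in> e}"
    then obtain u v where "e = {u, v}" "u \<noteq> v" "u \<in> fst G" "v \<in> fst G"
      using assms(1) by (auto elim: simple_graph_edgeE)
    with assms(2) e show "\<exists>y \<in> {y \<in> V - {x}. {x, y} \<in> snd G}. e = {x, y}"
      by (auto simp: insert_commute)
  qed (auto simp: doubleton_eq_iff)
  then show ?thesis
    unfolding deg_def by (rule bij_betw_same_card)
qed

lemma deg_eq_0:
  assumes "simple_graph G" "x \<notin> fst G"
  shows "deg G x = 0"
proof -
  have "{e \<in> snd G. x \<in> e} = {}"
    using assms by (auto simp: simple_graph_def)
  then show ?thesis
    by (simp only: deg_def card.empty)
qed

lemma sum_complete_edges_sum_graphs_containing:
  fixes f :: "'a graph \<Rightarrow> real"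
  assumes "finite V" "finite \<G>" "\<And>G. G \<in> \<G> \<Longrightarrow> simple_graph G \<and> fst G \<subseteq> V"
  shows "(\<Sum>a\<in>complete_edges V. \<Sum>G\<in>{G\<in>\<G>. a \<in> snd G}. f G) = (\<Sum>G\<in>\<G>. card (snd G) * f G)"
proof -
  have "(\<Sum>a\<in>complete_edges V. \<Sum>G\<in>{G\<in>\<G>. a \<in> snd G}. f G)
      = (\<Sum>G\<in>\<G>. \<Sum>a\<in>{a\<in>complete_edges V. a \<in> snd G}. f G)"
    using assms(1,2) by (intro sum.swap_restrict finite_complete_edges)
  also have "\<dots> = (\<Sum>G\<in>\<G>. card (snd G) * f G)"
  proof (rule sum.cong[OF refl])
    fix G assume "G \<in> \<G>"
    then have "{a\<in>complete_edges V. a \<in> snd G} = snd G"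
      using assms(3) simple_graph_edges_subset_complete_edges by blast
    then show "(\<Sum>a\<in>{a\<in>complete_edges V. a \<in> snd G}. f G) = card (snd G) * f G"
      by simp
  qed
  finally show ?thesis .
qed

lemma sum_neighbours_sum_graphs_containing:
  fixes f :: "'a graph \<Rightarrow> real"
  assumes "finite V" "finite \<G>" "\<And>G. G \<in> \<G> \<Longrightarrow> simple_graph G \<and> fst G \<subseteq> V"
  shows "(\<Sum>y\<in>V - {x}. \<Sum>G\<in>{G\<in>\<G>. {x, y} \<in> snd G}. f G)
       = (\<Sum>G\<in>{G\<in>\<G>. x \<in> fst G}. deg G x * f G)"
proof -
  have "(\<Sum>y\<in>V - {x}. \<Sum>G\<in>{G\<in>\<G>. {x, y} \<in> snd G}. f G)
      = (\<Sum>G\<in>\<G>. \<Sum>y\<in>{y \<in> V - {x}. {x, y} \<in> snd G}. f G)"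
    using assms(1,2) by (intro sum.swap_restrict) auto
  also have "\<dots> = (\<Sum>G\<in>\<G>. deg G x * f G)"
  proof (rule sum.cong[OF refl])
    fix G assume "G \<in> \<G>"
    then have "card {y \<in> V - {x}. {x, y} \<in> snd G} = deg G x"
      using assms(3) by (blast intro: card_neighbours_eq_deg)
    then show "(\<Sum>y\<in>{y \<in> V - {x}. {x, y} \<in> snd G}. f G) = deg G x * f G"
      by (simp only: sum_constant)
  qed
  also have "\<dots> = (\<Sum>G\<in>{G\<in>\<G>. x \<in> fst G}. deg G x * f G)"
  proof (rule sum.mono_neutral_right)
    show "\<forall>G\<in>\<G> - {G\<in>\<G>. x \<in> fst G}. deg G x * f G = 0"
    proof
      fix G assume "G \<in> \<G> - {G\<in>\<G>. x \<in> fst G}"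
      then show "deg G x * f G = 0"
        using assms(3)[of G] deg_eq_0[of G x] by simp
    qed
  qed (use assms(2) in auto)
  finally show ?thesis .
qed

lemma cp_card_edges:
  assumes "simple_graph H" "G \<in> cp V H"
  shows "card (snd G) = card (snd H)"
proof -
  have "simple_graph G" "graph_iso H G"
    using assms(2) by (auto simp: cp_def)
  then show ?thesis
    by (rule graph_iso_card_edges[OF assms(1)])
qed

lemma sum_complete_edges_beta_containing:
  assumes "finite V" "simple_graph H"
  shows "(\<Sum>a\<in>complete_edges V. \<Sum>G\<in>{G\<in>cp V H. a \<in> snd G}. mu_graph \<nu> G)
       = card (snd H) * beta V \<nu> H"
  using assms
  by (simp add: sum_complete_edges_sum_graphs_containing finite_cp cp_simple_graph_on cp_card_edges
      beta_def sum_distrib_left cong: sum.cong)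

lemma sum_complete_edges_weighted_beta_containing:
  assumes "finite V" "\<forall>i<k. simple_graph (H i) \<and> card (snd (H i)) = m"
  shows "(\<Sum>a\<in>complete_edges V. \<Sum>i<k. \<gamma> i * (\<Sum>G\<in>{G\<in>cp V (H i). a \<in> snd G}. mu_graph \<nu> G))
       = m * (\<Sum>i<k. \<gamma> i * beta V \<nu> (H i))"
proof -
  have "(\<Sum>a\<in>complete_edges V. \<Sum>i<k. \<gamma> i * (\<Sum>G\<in>{G\<in>cp V (H i). a \<in> snd G}. mu_graph \<nu> G))
      = (\<Sum>i<k. \<gamma> i * (\<Sum>a\<in>complete_edges V. \<Sum>G\<in>{G\<in>cp V (H i). a \<in> snd G}. mu_graph \<nu> G))"
    by (subst sum.swap) (simp add: sum_distrib_left)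
  also have "\<dots> = m * (\<Sum>i<k. \<gamma> i * beta V \<nu> (H i))"
    using assms by (simp add: sum_complete_edges_beta_containing mult.left_commute flip: sum_distrib_left)
  finally show ?thesis .
qed

lemma mu_bar_identity_of_edge_identity:
  assumes "finite V" "\<forall>i<k. simple_graph (H i)" "x \<in> V"
    and edge: "\<And>e. e \<in> complete_edges V
      \<Longrightarrow> c * \<mu> e = (\<Sum>i<k. \<gamma> i * (\<Sum>G\<in>{G\<in>cp V (H i). e \<in> snd G}. mu_graph \<mu> G))"
  shows "c * mu_bar V \<mu> x
       = (\<Sum>i<k. \<gamma> i * (\<Sum>G\<in>{G\<in>cp V (H i). x \<in> fst G}. deg G x * mu_graph \<mu> G))"
proof -
  have "c * mu_bar V \<mu> x = (\<Sum>y\<in>V - {x}. c * \<mu> {x, y})"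
    by (simp add: mu_bar_def sum_distrib_left)
  also have "\<dots> = (\<Sum>y\<in>V - {x}. \<Sum>i<k. \<gamma> i * (\<Sum>G\<in>{G\<in>cp V (H i). {x, y} \<in> snd G}. mu_graph \<mu> G))"
    using assms(3) by (intro sum.cong refl edge) (auto simp: complete_edges_def card_2_iff)
  also have "\<dots> = (\<Sum>i<k. \<gamma> i * (\<Sum>y\<in>V - {x}. \<Sum>G\<in>{G\<in>cp V (H i). {x, y} \<in> snd G}. mu_graph \<mu> G))"
    by (subst sum.swap) (simp add: sum_distrib_left)
  finally show ?thesis
    using assms(1) by (simp add: sum_neighbours_sum_graphs_containing finite_cp cp_simple_graph_on)
qed

theorem lemma4p3:
  fixes m k :: nat and H :: "nat \<Rightarrow> 'b graph" and V :: "'a set"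
    and \<gamma> :: "nat \<Rightarrow> real" and \<mu> :: "'a set \<Rightarrow> real" and Opt :: real
  assumes "0 < m"
    and "\<forall>i<k. simple_graph (H i) \<and> card (snd (H i)) = m"
    and "finite V" and "2 \<le> card V"
    and O_def: "Opt = (SUP \<nu>\<in>edge_measures V. \<Sum>i<k. \<gamma> i * beta V \<nu> (H i))"
    and "\<mu> \<in> edge_measures V"
    and "(\<Sum>i<k. \<gamma> i * beta V \<mu> (H i)) = Opt"
  shows "(\<forall>e\<in>complete_edges V.
            real m * Opt * \<mu> e = (\<Sum>i<k. \<gamma> i * (\<Sum>G\<in>{G\<in>cp V (H i). e \<in> snd G}. mu_graph \<mu> G)))
       \<and> (\<forall>x\<in>V.
            real m * Opt * mu_bar V \<mu> x
              = (\<Sum>i<k. \<gamma> i * (\<Sum>G\<in>{G\<in>cp V (H i). x \<in> fst G}. real (deg G x) * mu_graph \<mu> G)))"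
proof -
  let ?E = "complete_edges V"
  define g where "g a = (\<Sum>i<k. \<gamma> i * beta_partial V \<mu> (H i) a)" for a
  have euler: "\<mu> a * g a = (\<Sum>i<k. \<gamma> i * (\<Sum>G\<in>{G\<in>cp V (H i). a \<in> snd G}. mu_graph \<mu> G))" for a
    using assms(3) by (simp add: g_def sum_distrib_left mult.left_commute mu_times_beta_partial)
  have maximal: "(\<Sum>i<k. \<gamma> i * beta V \<nu> (H i)) \<le> (\<Sum>i<k. \<gamma> i * beta V \<mu> (H i))"
    if "\<nu> \<in> edge_measures V" for \<nu>
    using cSUP_upper[OF that bdd_above_weighted_beta[OF assms(3)]] O_def assms(7) by simp
  have gradient_le: "g e' \<le> g e" if "e \<in> ?E" "e' \<in> ?E" "0 < \<mu> e" for e e'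
  proof (rule maximizer_transfer_gradient_le[where \<Phi> = "\<lambda>\<nu>. \<Sum>i<k. \<gamma> i * beta V \<nu> (H i)",
        OF assms(6,3) maximal that])
    show "((\<lambda>t. \<Sum>i<k. \<gamma> i * beta V (transfer \<mu> e e' t) (H i)) has_real_derivative g e' - g e) (at 0)"
      unfolding g_def sum_subtractf[symmetric] right_diff_distrib[symmetric]
      by (intro DERIV_sum DERIV_cmult has_field_derivative_beta_transfer assms(3))
  qed
  have multiplier: "(\<Sum>a\<in>?E. \<mu> a * g a) = real m * Opt"
    unfolding euler sum_complete_edges_weighted_beta_containing[OF assms(3,2)] assms(7) ..
  have edge: "real m * Opt * \<mu> e = (\<Sum>i<k. \<gamma> i * (\<Sum>G\<in>{G\<in>cp V (H i). e \<in> snd G}. mu_graph \<mu> G))"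
    if "e \<in> ?E" for e
    using gradient_eq_on_support[where g = g, OF assms(6) gradient_le that] multiplier euler[of e]
    by (simp add: mult.commute)
  moreover have "real m * Opt * mu_bar V \<mu> x
      = (\<Sum>i<k. \<gamma> i * (\<Sum>G\<in>{G\<in>cp V (H i). x \<in> fst G}. real (deg G x) * mu_graph \<mu> G))"
    if "x \<in> V" for x
    using assms(2,3) that edge by (intro mu_bar_identity_of_edge_identity) auto
  ultimately show ?thesis
    by blast
qed

end
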